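(* Let $p(x,y)=1+xy\,(1+h(x,y))$ be an analytic germ with $h(0,0)=0$, and suppose the 3-web $(dx,dy,dy-p\,dx)$ has nonzero Blaschke curvature at the origin. Let $r=r(x)$ and $s=s(y)$ be analytic germs of one variable satisfying $$r'(x)\,p-r(x)\,\frac{\partial p}{\partial x}-\Big(s'(y)\,p^3+s(y)\,p^2\,\frac{\partial p}{\partial y}\Big)=0 .$$ If $r(0)=s(0)=0$, then $r\equiv 0$ and $s\equiv 0$. Equivalently, every nontrivial abelian relation $(\omega_1,\dots,\omega_4)$ of the 4-web $(dx,\,dy,\,dy-p\,dx,\,dy+p\,dx)$, with $\omega_1=r\,dx$ and $\omega_2=s\,dy$, satisfies $r(0)\neq0$ or $s(0)\neq0$. *)

theory Defs
  imports "HOL-Analysis.Analysis"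
begin

text \<open>Germs of complex analytic functions of two variables at the origin:
  given near (0,0) by an (absolutely, i.e. unconditionally) convergent double
  power series on a small polydisc.\<close>
definition analytic_germ2 :: "(complex \<Rightarrow> complex \<Rightarrow> complex) \<Rightarrow> bool" where
  "analytic_germ2 f \<longleftrightarrow>
     (\<exists>c :: nat \<Rightarrow> nat \<Rightarrow> complex. \<exists>\<epsilon>>0. \<forall>x y. norm x < \<epsilon> \<and> norm y < \<epsilon> \<longrightarrow>
        ((\<lambda>(i,j). c i j * x ^ i * y ^ j) has_sum f x y) UNIV)"

definition partial_x :: "(complex \<Rightarrow> complex \<Rightarrow> complex) \<Rightarrow> complex \<Rightarrow> complex \<Rightarrow> complex" where
  "partial_x f x y = deriv (\<lambda>t. f t y) x"

definition partial_y :: "(complex \<Rightarrow> complex \<Rightarrow> complex) \<Rightarrow> complex \<Rightarrow> complex \<Rightarrow> complex" where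
  "partial_y f x y = deriv (\<lambda>t. f x t) y"

text \<open>Normalising
  w1 = p dx, w2 = -dy, w3 = dy - p dx (so w1+w2+w3 = 0), the connection form
  gamma with d w_i = gamma \<and> w_i is gamma = (p_y / p) dy, and the curvature
  2-form is d gamma = d/dx (p_y/p) dx \<and> dy.  We record its coefficient.\<close>
definition blaschke_curvature_web3 ::
  "(complex \<Rightarrow> complex \<Rightarrow> complex) \<Rightarrow> complex \<Rightarrow> complex \<Rightarrow> complex" where
  "blaschke_curvature_web3 p x y =
     partial_x (\<lambda>a b. partial_y p a b / p a b) x y"

end

theory Submission
  imports Defs "HOL-Complex_Analysis.Complex_Analysis"
begin

text \<open>On the axes p = 1 and the derivative of p along the axis vanishes, so the equation reduces
  to r'(x) = s'(0) and s'(y) = r'(0); with r(0) = s(0) = 0 this forces r = a x and s = a y.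
  For this linear pair the equation on the diagonal x = y = t reads
  a (p - t p_x - p^3 - t p^2 p_y) = 0, and the bracket is -4 t^2 + o(t^2), because h(t,t),
  t h_x(t,t) and t h_y(t,t) tend to 0 by the Cauchy estimates for the power series of h.
  Hence a = 0.\<close>

lemma eventually_nhds_Pair_metric:
  fixes a :: "'a::metric_space" and b :: "'b::metric_space"
  assumes "\<forall>\<^sub>F z in nhds (a, b). P z"
  obtains e where "0 < e" and "\<And>x y. dist x a < e \<Longrightarrow> dist y b < e \<Longrightarrow> P (x, y)"
proof -
  obtain Pa Pb where "eventually Pa (nhds a)" "eventually Pb (nhds b)"
    and P: "\<And>x y. Pa x \<Longrightarrow> Pb y \<Longrightarrow> P (x, y)"
    using assms unfolding nhds_prod eventually_prod_filter by blast
  then obtain ea eb where "0 < ea" "\<And>x. dist x a < ea \<Longrightarrow> Pa x"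
    and "0 < eb" "\<And>y. dist y b < eb \<Longrightarrow> Pb y"
    unfolding eventually_nhds_metric by blast
  then show ?thesis
    using that[of "min ea eb"] P by simp
qed

lemma holomorphic_on_ball_deriv_const:
  fixes f :: "complex \<Rightarrow> complex"
  assumes "f holomorphic_on ball c d" and "\<And>z. z \<in> ball c d \<Longrightarrow> deriv f z = a"
    and "z \<in> ball c d"
  shows "f z = f c + a * (z - c)"
proof -
  have "\<exists>k. \<forall>w\<in>ball c d. f w - a * w = k"
  proof (rule has_field_derivative_zero_constant)
    fix w assume w: "w \<in> ball c d"
    have "(f has_field_derivative a) (at w within ball c d)"
      using holomorphic_derivI[OF assms(1) open_ball w] assms(2)[OF w] by simp
    then show "((\<lambda>w. f w - a * w) has_field_derivative 0) (at w within ball c d)"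
      by (auto intro!: derivative_eq_intros)
  qed simp
  moreover have "c \<in> ball c d"
    using \<open>z \<in> ball c d\<close> dist_not_less_zero[of c z] by (simp, linarith)
  ultimately show ?thesis
    using \<open>z \<in> ball c d\<close> by (auto simp: algebra_simps)
qed

lemma tendsto_mult_zero_of_bounded:
  fixes g :: "'a::real_normed_field \<Rightarrow> 'a"
  assumes "\<forall>\<^sub>F t in at 0. norm (g t) \<le> K"
  shows "((\<lambda>t. t * g t) \<longlongrightarrow> 0) (at 0)"
proof (rule Lim_null_comparison)
  show "\<forall>\<^sub>F t in at 0. norm (t * g t) \<le> norm t * K"
    using assms by eventually_elim (simp add: norm_mult mult_left_mono)
qed (auto intro!: tendsto_eq_intros)

lemma tendsto_diagonal_of_bounded_partials:
  fixes f :: "complex \<Rightarrow> complex \<Rightarrow> complex"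
  assumes "0 < \<rho>"
    and dx: "\<And>x y. norm x < \<rho> \<Longrightarrow> norm y < \<rho> \<Longrightarrow>
           ((\<lambda>t. f t y) has_field_derivative partial_x f x y) (at x)"
    and dx_bound: "\<And>x y. norm x < \<rho> \<Longrightarrow> norm y < \<rho> \<Longrightarrow> norm (partial_x f x y) \<le> K"
    and dy: "\<And>x y. norm x < \<rho> \<Longrightarrow> norm y < \<rho> \<Longrightarrow>
           ((\<lambda>t. f x t) has_field_derivative partial_y f x y) (at y)"
    and dy_bound: "\<And>x y. norm x < \<rho> \<Longrightarrow> norm y < \<rho> \<Longrightarrow> norm (partial_y f x y) \<le> K"
  shows "((\<lambda>t. f t t) \<longlongrightarrow> f 0 0) (at 0)"
proof -
  have lipschitz: "norm (g a - g b) \<le> K * norm (a - b)"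
    if "\<And>z. norm z < \<rho> \<Longrightarrow> (g has_field_derivative g' z) (at z)"
      "\<And>z. norm z < \<rho> \<Longrightarrow> norm (g' z) \<le> K" "norm a < \<rho>" "norm b < \<rho>"
    for g g' :: "complex \<Rightarrow> complex" and a b
  proof (rule field_differentiable_bound[of "ball 0 \<rho>" g g'])
    show "(g has_field_derivative g' z) (at z within ball 0 \<rho>)" if "z \<in> ball 0 \<rho>" for z
      using that \<open>\<And>z. norm z < \<rho> \<Longrightarrow> (g has_field_derivative g' z) (at z)\<close>
      by (simp add: has_field_derivative_at_within)
  qed (use that in simp_all)
  have "norm (f t t - f 0 0) \<le> 2 * K * norm t" if "norm t < \<rho>" for t
  proof -
    have "norm (f t t - f 0 t) \<le> K * norm (t - 0)"
      by (rule lipschitz[where g' = "\<lambda>z. partial_x f z t"]) (use dx dx_bound that \<open>0 < \<rho>\<close> in auto)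
    moreover have "norm (f 0 t - f 0 0) \<le> K * norm (t - 0)"
      by (rule lipschitz[where g' = "partial_y f 0"]) (use dy dy_bound that \<open>0 < \<rho>\<close> in auto)
    ultimately show ?thesis
      using norm_triangle_ineq[of "f t t - f 0 t" "f 0 t - f 0 0"] by simp
  qed
  then have "\<forall>\<^sub>F t in at 0. norm (f t t - f 0 0) \<le> 2 * K * norm t"
    using \<open>0 < \<rho>\<close> by (auto simp: eventually_at dist_norm)
  then have "((\<lambda>t. f t t - f 0 0) \<longlongrightarrow> 0) (at 0)"
    by (rule Lim_null_comparison) (auto intro!: tendsto_eq_intros)
  then show ?thesis by (simp add: LIM_zero_iff)
qed

lemma double_power_series_slice_sums:
  fixes c :: "nat \<Rightarrow> nat \<Rightarrow> complex" and f :: "complex \<Rightarrow> complex \<Rightarrow> complex"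
  assumes "0 < \<epsilon>"
    and sums: "\<And>x y. norm x < \<epsilon> \<Longrightarrow> norm y < \<epsilon> \<Longrightarrow>
        ((\<lambda>(i,j). c i j * x ^ i * y ^ j) has_sum f x y) UNIV"
    and "norm y < \<epsilon>"
  obtains b where "\<And>x. norm x < \<epsilon> \<Longrightarrow> (\<lambda>i. b i * x ^ i) sums f x y"
proof -
  define x0 where "x0 = complex_of_real (\<epsilon> / 2)"
  have x0: "norm x0 < \<epsilon>" "x0 \<noteq> 0"
    using \<open>0 < \<epsilon>\<close> by (auto simp: x0_def)
  have row_summable: "(\<lambda>j. c i j * y ^ j) summable_on UNIV" for i
  proof -
    have "(\<lambda>(i,j). c i j * x0 ^ i * y ^ j) summable_on Sigma UNIV (\<lambda>_. UNIV)"
      using sums[OF x0(1) \<open>norm y < \<epsilon>\<close>] unfolding summable_on_def by auto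
    then have "(\<lambda>j. x0 ^ i * (c i j * y ^ j)) summable_on UNIV"
      using summable_on_SigmaD1[of "\<lambda>i j. c i j * x0 ^ i * y ^ j" UNIV "\<lambda>_. UNIV" i]
      by (simp add: mult_ac)
    then show ?thesis
      using summable_on_cmult_right'[of "x0 ^ i" "\<lambda>j. c i j * y ^ j" UNIV] x0 by simp
  qed
  define b where "b i = (\<Sum>\<^sub>\<infinity>j. c i j * y ^ j)" for i
  have "(\<lambda>i. b i * x ^ i) sums f x y" if "norm x < \<epsilon>" for x
  proof -
    have "((\<lambda>j. c i j * x ^ i * y ^ j) has_sum (b i * x ^ i)) UNIV" for i
      using has_sum_cmult_right[OF has_sum_infsum[OF row_summable], of "x ^ i"]
      by (simp add: b_def mult_ac)
    then have "((\<lambda>i. b i * x ^ i) has_sum f x y) UNIV"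
      using has_sum_Sigma'[where f = "\<lambda>(i,j). c i j * x ^ i * y ^ j" and A = UNIV and B = "\<lambda>_. UNIV"]
        sums[OF that \<open>norm y < \<epsilon>\<close>] by auto
    then show ?thesis by (rule has_sum_imp_sums)
  qed
  then show ?thesis using that by blast
qed

lemma double_power_series_slice_holomorphic:
  fixes c :: "nat \<Rightarrow> nat \<Rightarrow> complex" and f :: "complex \<Rightarrow> complex \<Rightarrow> complex"
  assumes "0 < \<epsilon>"
    and "\<And>x y. norm x < \<epsilon> \<Longrightarrow> norm y < \<epsilon> \<Longrightarrow>
        ((\<lambda>(i,j). c i j * x ^ i * y ^ j) has_sum f x y) UNIV"
    and "norm y < \<epsilon>"
  shows "(\<lambda>x. f x y) holomorphic_on ball 0 \<epsilon>"
proof -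
  obtain b where b: "\<And>x. norm x < \<epsilon> \<Longrightarrow> (\<lambda>i. b i * x ^ i) sums f x y"
    using double_power_series_slice_sums assms by blast
  show ?thesis
    unfolding holomorphic_on_open[OF open_ball]
  proof
    fix z :: complex assume z: "z \<in> ball 0 \<epsilon>"
    have "((\<lambda>z. \<Sum>n. b n * z ^ n) has_field_derivative (\<Sum>n. diffs b n * z ^ n)) (at z)"
      by (rule termdiffs_strong') (use b sums_summable z in auto)
    then have "((\<lambda>x. f x y) has_field_derivative (\<Sum>n. diffs b n * z ^ n)) (at z)"
      by (rule has_field_derivative_transform_within_open[OF _ open_ball z])
         (use b sums_unique in force)
    then show "\<exists>f'. ((\<lambda>x. f x y) has_field_derivative f') (at z)" by blast
  qed
qed

lemma double_power_series_bounded: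
  fixes c :: "nat \<Rightarrow> nat \<Rightarrow> complex" and f :: "complex \<Rightarrow> complex \<Rightarrow> complex"
  assumes sums: "\<And>x y. norm x < \<epsilon> \<Longrightarrow> norm y < \<epsilon> \<Longrightarrow>
        ((\<lambda>(i,j). c i j * x ^ i * y ^ j) has_sum f x y) UNIV"
    and "0 < R" "R < \<epsilon>"
  obtains M where "\<And>x y. norm x \<le> R \<Longrightarrow> norm y \<le> R \<Longrightarrow> norm (f x y) \<le> M"
proof -
  define majorant where "majorant = (\<lambda>(i,j). norm (c i j) * R ^ i * R ^ j)"
  have "(\<lambda>(i,j). c i j * complex_of_real R ^ i * complex_of_real R ^ j) summable_on UNIV"
    using sums[of "complex_of_real R" "complex_of_real R"] \<open>0 < R\<close> \<open>R < \<epsilon>\<close>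
    unfolding summable_on_def by auto
  then have "majorant summable_on UNIV"
    unfolding summable_on_iff_abs_summable_on_complex
    by (rule summable_on_cong[THEN iffD1, rotated])
       (use \<open>0 < R\<close> in \<open>auto simp: majorant_def norm_mult norm_power\<close>)
  then obtain M where M: "(majorant has_sum M) UNIV"
    unfolding summable_on_def by blast
  have "norm (f x y) \<le> M" if "norm x \<le> R" "norm y \<le> R" for x y
  proof (rule norm_infsum_le[OF _ M])
    show "((\<lambda>(i,j). c i j * x ^ i * y ^ j) has_sum f x y) UNIV"
      using sums that \<open>R < \<epsilon>\<close> by auto
    fix ij :: "nat \<times> nat"
    obtain i j where ij: "ij = (i,j)" by (cases ij)
    have "norm x ^ i * norm y ^ j \<le> R ^ i * R ^ j"
      using that \<open>0 < R\<close> by (intro mult_mono power_mono) auto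
    then show "norm ((\<lambda>(i,j). c i j * x ^ i * y ^ j) ij) \<le> majorant ij"
      by (simp add: ij majorant_def norm_mult norm_power mult.assoc mult_left_mono)
  qed
  then show ?thesis using that by blast
qed

lemma analytic_germ2_partial_x_bounded:
  assumes "analytic_germ2 f"
  obtains \<rho> K where "0 < \<rho>"
    and "\<And>x y. norm x < \<rho> \<Longrightarrow> norm y < \<rho> \<Longrightarrow>
           ((\<lambda>t. f t y) has_field_derivative partial_x f x y) (at x)"
    and "\<And>x y. norm x < \<rho> \<Longrightarrow> norm y < \<rho> \<Longrightarrow> norm (partial_x f x y) \<le> K"
proof -
  obtain c \<epsilon> where "0 < \<epsilon>" and sums: "\<And>x y. norm x < \<epsilon> \<Longrightarrow> norm y < \<epsilon> \<Longrightarrow>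
        ((\<lambda>(i,j). c i j * x ^ i * y ^ j) has_sum f x y) UNIV"
    using assms unfolding analytic_germ2_def by blast
  define R where "R = \<epsilon> / 2"
  have R: "0 < R" "R < \<epsilon>" using \<open>0 < \<epsilon>\<close> by (auto simp: R_def)
  obtain M where M: "\<And>x y. norm x \<le> R \<Longrightarrow> norm y \<le> R \<Longrightarrow> norm (f x y) \<le> M"
    using double_power_series_bounded[OF sums R] by blast
  define \<rho> where "\<rho> = R / 2"
  have "0 < \<rho>" using R by (simp add: \<rho>_def)
  have "((\<lambda>t. f t y) has_field_derivative partial_x f x y) (at x) \<and> norm (partial_x f x y) \<le> M / \<rho>"
    if xy: "norm x < \<rho>" "norm y < \<rho>" for x y
  proof
    have hol: "(\<lambda>t. f t y) holomorphic_on ball 0 \<epsilon>"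
      using double_power_series_slice_holomorphic[OF \<open>0 < \<epsilon>\<close> sums] xy R by (simp add: \<rho>_def)
    have disc: "cball x \<rho> \<subseteq> ball 0 R"
    proof
      fix w assume "w \<in> cball x \<rho>"
      then have "norm w \<le> norm x + \<rho>"
        using norm_triangle_ineq2[of w x] by (auto simp: dist_norm norm_minus_commute)
      then show "w \<in> ball 0 R" using xy by (simp add: \<rho>_def)
    qed
    then have sub: "cball x \<rho> \<subseteq> ball 0 \<epsilon>"
      using R by auto
    show "((\<lambda>t. f t y) has_field_derivative partial_x f x y) (at x)"
      unfolding partial_x_def using sub \<open>0 < \<rho>\<close>
      by (intro holomorphic_derivI[OF hol open_ball]) (auto simp: subset_iff)
    have "norm ((deriv ^^ 1) (\<lambda>t. f t y) x) \<le> fact 1 * M / \<rho> ^ 1"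
    proof (rule Cauchy_inequality)
      show "(\<lambda>t. f t y) holomorphic_on ball x \<rho>"
        using hol sub ball_subset_cball holomorphic_on_subset by blast
      show "continuous_on (cball x \<rho>) (\<lambda>t. f t y)"
        using hol sub holomorphic_on_imp_continuous_on continuous_on_subset by blast
      fix w assume "norm (x - w) = \<rho>"
      then have "w \<in> ball 0 R" using disc by (auto simp: dist_norm)
      then show "norm (f w y) \<le> M" using M xy R by (simp add: \<rho>_def)
    qed (rule \<open>0 < \<rho>\<close>)
    then show "norm (partial_x f x y) \<le> M / \<rho>"
      by (simp add: partial_x_def)
  qed
  then show ?thesis using that \<open>0 < \<rho>\<close> by blast
qed

lemma analytic_germ2_swap:
  assumes "analytic_germ2 f"
  shows "analytic_germ2 (\<lambda>x y. f y x)"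
proof -
  obtain c \<epsilon> where "0 < \<epsilon>" and sums: "\<And>x y. norm x < \<epsilon> \<Longrightarrow> norm y < \<epsilon> \<Longrightarrow>
        ((\<lambda>(i,j). c i j * x ^ i * y ^ j) has_sum f x y) UNIV"
    using assms unfolding analytic_germ2_def by blast
  have "((\<lambda>(i,j). c j i * x ^ i * y ^ j) has_sum f y x) UNIV"
    if "norm x < \<epsilon>" "norm y < \<epsilon>" for x y
  proof -
    have "((\<lambda>(i,j). c i j * y ^ i * x ^ j) has_sum f y x) (UNIV \<times> UNIV)"
      using sums that by simp
    then have "((\<lambda>(a,b). (\<lambda>(i,j). c i j * y ^ i * x ^ j) (b,a)) has_sum f y x) (UNIV \<times> UNIV)"
      using has_sum_swap by blast
    then have "((\<lambda>(i,j). c j i * x ^ i * y ^ j) has_sum f y x) (UNIV \<times> UNIV)"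
      by (rule has_sum_cong[THEN iffD1, rotated]) (auto simp: mult_ac)
    then show ?thesis by simp
  qed
  then show ?thesis
    unfolding analytic_germ2_def using \<open>0 < \<epsilon>\<close>
    by (intro exI[of _ "\<lambda>i j. c j i"] exI[of _ \<epsilon>]) simp
qed

lemma analytic_germ2_partial_y_bounded:
  assumes "analytic_germ2 f"
  obtains \<rho> K where "0 < \<rho>"
    and "\<And>x y. norm x < \<rho> \<Longrightarrow> norm y < \<rho> \<Longrightarrow>
           ((\<lambda>t. f x t) has_field_derivative partial_y f x y) (at y)"
    and "\<And>x y. norm x < \<rho> \<Longrightarrow> norm y < \<rho> \<Longrightarrow> norm (partial_y f x y) \<le> K"
proof -
  have "partial_y f x y = partial_x (\<lambda>x y. f y x) y x" for x y
    by (simp add: partial_x_def partial_y_def)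
  then show ?thesis
    using analytic_germ2_partial_x_bounded[OF analytic_germ2_swap[OF assms]] that
    by (metis (no_types, lifting))
qed

lemma analytic_germ2_partials_bounded:
  assumes "analytic_germ2 f"
  obtains \<rho> K where "0 < \<rho>"
    and "\<And>x y. norm x < \<rho> \<Longrightarrow> norm y < \<rho> \<Longrightarrow>
           ((\<lambda>t. f t y) has_field_derivative partial_x f x y) (at x)"
    and "\<And>x y. norm x < \<rho> \<Longrightarrow> norm y < \<rho> \<Longrightarrow> norm (partial_x f x y) \<le> K"
    and "\<And>x y. norm x < \<rho> \<Longrightarrow> norm y < \<rho> \<Longrightarrow>
           ((\<lambda>t. f x t) has_field_derivative partial_y f x y) (at y)"
    and "\<And>x y. norm x < \<rho> \<Longrightarrow> norm y < \<rho> \<Longrightarrow> norm (partial_y f x y) \<le> K"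
proof -
  obtain \<rho>x Kx where "0 < \<rho>x"
    and "\<And>x y. norm x < \<rho>x \<Longrightarrow> norm y < \<rho>x \<Longrightarrow>
           ((\<lambda>t. f t y) has_field_derivative partial_x f x y) (at x)"
    and "\<And>x y. norm x < \<rho>x \<Longrightarrow> norm y < \<rho>x \<Longrightarrow> norm (partial_x f x y) \<le> Kx"
    using analytic_germ2_partial_x_bounded[OF assms] by blast
  moreover obtain \<rho>y Ky where "0 < \<rho>y"
    and "\<And>x y. norm x < \<rho>y \<Longrightarrow> norm y < \<rho>y \<Longrightarrow>
           ((\<lambda>t. f x t) has_field_derivative partial_y f x y) (at y)"
    and "\<And>x y. norm x < \<rho>y \<Longrightarrow> norm y < \<rho>y \<Longrightarrow> norm (partial_y f x y) \<le> Ky"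
    using analytic_germ2_partial_y_bounded[OF assms] by blast
  ultimately show ?thesis
    using that[of "min \<rho>x \<rho>y" "max Kx Ky"] by (simp add: le_max_iff_disj)
qed

lemma analytic_germ2_diagonal_limits:
  assumes "analytic_germ2 f"
  shows "((\<lambda>t. f t t) \<longlongrightarrow> f 0 0) (at 0)"
    and "((\<lambda>t. t * partial_x f t t) \<longlongrightarrow> 0) (at 0)"
    and "((\<lambda>t. t * partial_y f t t) \<longlongrightarrow> 0) (at 0)"
proof -
  obtain \<rho> K where "0 < \<rho>"
    and dx: "\<And>x y. norm x < \<rho> \<Longrightarrow> norm y < \<rho> \<Longrightarrow>
           ((\<lambda>t. f t y) has_field_derivative partial_x f x y) (at x)"
    and dx_bound: "\<And>x y. norm x < \<rho> \<Longrightarrow> norm y < \<rho> \<Longrightarrow> norm (partial_x f x y) \<le> K"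
    and dy: "\<And>x y. norm x < \<rho> \<Longrightarrow> norm y < \<rho> \<Longrightarrow>
           ((\<lambda>t. f x t) has_field_derivative partial_y f x y) (at y)"
    and dy_bound: "\<And>x y. norm x < \<rho> \<Longrightarrow> norm y < \<rho> \<Longrightarrow> norm (partial_y f x y) \<le> K"
    using analytic_germ2_partials_bounded[OF assms] by blast
  show "((\<lambda>t. f t t) \<longlongrightarrow> f 0 0) (at 0)"
    by (rule tendsto_diagonal_of_bounded_partials[OF \<open>0 < \<rho>\<close> dx dx_bound dy dy_bound])
  have near_0: "\<forall>\<^sub>F t in at 0. t \<in> ball 0 \<rho>"
    using eventually_at_ball[OF \<open>0 < \<rho>\<close>, of 0 UNIV] by simp
  have "\<forall>\<^sub>F t in at 0. norm (partial_x f t t) \<le> K"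
    using near_0 by eventually_elim (simp add: dx_bound)
  then show "((\<lambda>t. t * partial_x f t t) \<longlongrightarrow> 0) (at 0)"
    by (rule tendsto_mult_zero_of_bounded)
  have "\<forall>\<^sub>F t in at 0. norm (partial_y f t t) \<le> K"
    using near_0 by eventually_elim (simp add: dy_bound)
  then show "((\<lambda>t. t * partial_y f t t) \<longlongrightarrow> 0) (at 0)"
    by (rule tendsto_mult_zero_of_bounded)
qed

definition abelian_defect ::
  "(complex \<Rightarrow> complex \<Rightarrow> complex) \<Rightarrow> (complex \<Rightarrow> complex) \<Rightarrow> (complex \<Rightarrow> complex) \<Rightarrow>
   complex \<Rightarrow> complex \<Rightarrow> complex" where
  "abelian_defect p r s x y =
     deriv r x * p x y - r x * partial_x p x y
     - (deriv s y * p x y ^ 3 + s y * p x y ^ 2 * partial_y p x y)"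

lemma web_p_on_axes:
  assumes "\<forall>x y. p x y = 1 + x * y * (1 + h x y)"
  shows "p x 0 = 1" "p 0 y = 1" "partial_x p x 0 = 0" "partial_y p 0 y = 0"
proof -
  have "(\<lambda>t. p t 0) = (\<lambda>_. 1)" "p 0 = (\<lambda>_. 1)"
    using assms by auto
  then show "p x 0 = 1" "p 0 y = 1" "partial_x p x 0 = 0" "partial_y p 0 y = 0"
    unfolding partial_x_def partial_y_def by (metis deriv_const)+
qed

lemma web_partial_x:
  assumes "\<forall>x y. p x y = 1 + x * y * (1 + h x y)"
    and "((\<lambda>t. h t y) has_field_derivative partial_x h x y) (at x)"
  shows "partial_x p x y = y * (1 + h x y) + x * y * partial_x h x y"
proof -
  have "((\<lambda>t. 1 + t * y * (1 + h t y)) has_field_derivative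
          y * (1 + h x y) + x * y * partial_x h x y) (at x)"
    by (rule derivative_eq_intros assms(2) | simp add: algebra_simps)+
  then show ?thesis
    unfolding partial_x_def using assms(1) by (simp add: DERIV_imp_deriv)
qed

lemma web_partial_y:
  assumes "\<forall>x y. p x y = 1 + x * y * (1 + h x y)"
    and "((\<lambda>t. h x t) has_field_derivative partial_y h x y) (at y)"
  shows "partial_y p x y = x * (1 + h x y) + x * y * partial_y h x y"
proof -
  have "((\<lambda>t. 1 + x * t * (1 + h x t)) has_field_derivative
          x * (1 + h x y) + x * y * partial_y h x y) (at y)"
    by (rule derivative_eq_intros assms(2) | simp add: algebra_simps)+
  moreover have "p x = (\<lambda>t. 1 + x * t * (1 + h x t))"
    using assms(1) by auto
  ultimately show ?thesis
    unfolding partial_y_def by (simp add: DERIV_imp_deriv)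
qed

lemma web_diagonal_defect:
  assumes p_def: "\<forall>x y. p x y = 1 + x * y * (1 + h x y)"
    and "((\<lambda>s. h s t) has_field_derivative partial_x h t t) (at t)"
    and "((\<lambda>s. h t s) has_field_derivative partial_y h t t) (at t)"
  defines "u \<equiv> 1 + h t t"
  defines "P \<equiv> 1 + t ^ 2 * u"
  shows "abelian_defect p (\<lambda>z. z) (\<lambda>z. z) t t
           = t ^ 2 * (- u * (P * (2 + t ^ 2 * u) + 1 + P ^ 2)
                      - t * partial_x h t t - P ^ 2 * (t * partial_y h t t))"
proof -
  have "p t t = P" using p_def by (simp add: P_def u_def power2_eq_square)
  moreover have "partial_x p t t = t * u + t ^ 2 * partial_x h t t"
    using web_partial_x[OF p_def assms(2)] by (simp add: u_def power2_eq_square)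
  moreover have "partial_y p t t = t * u + t ^ 2 * partial_y h t t"
    using web_partial_y[OF p_def assms(3)] by (simp add: u_def power2_eq_square)
  ultimately show ?thesis
    by (simp add: abelian_defect_def P_def algebra_simps power2_eq_square power3_eq_cube)
qed

lemma web_diagonal_defect_tendsto:
  assumes h_an: "analytic_germ2 h" and "h 0 0 = 0"
    and p_def: "\<forall>x y. p x y = 1 + x * y * (1 + h x y)"
  shows "((\<lambda>t. abelian_defect p (\<lambda>z. z) (\<lambda>z. z) t t / t ^ 2) \<longlongrightarrow> -4) (at 0)"
proof -
  obtain \<rho> K where "0 < \<rho>"
    and dx: "\<And>x y. norm x < \<rho> \<Longrightarrow> norm y < \<rho> \<Longrightarrow>
           ((\<lambda>t. h t y) has_field_derivative partial_x h x y) (at x)"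
    and dy: "\<And>x y. norm x < \<rho> \<Longrightarrow> norm y < \<rho> \<Longrightarrow>
           ((\<lambda>t. h x t) has_field_derivative partial_y h x y) (at y)"
    using analytic_germ2_partials_bounded[OF h_an] by metis
  define u where "u t = 1 + h t t" for t
  define P where "P t = 1 + t ^ 2 * u t" for t
  define Q where "Q t = - u t * (P t * (2 + t ^ 2 * u t) + 1 + P t ^ 2)
                         - t * partial_x h t t - P t ^ 2 * (t * partial_y h t t)" for t
  have "\<forall>\<^sub>F t in at 0. Q t = abelian_defect p (\<lambda>z. z) (\<lambda>z. z) t t / t ^ 2"
    using eventually_at_ball'[OF \<open>0 < \<rho>\<close>, of 0 UNIV]
  proof eventually_elim
    case (elim t)
    then have t: "norm t < \<rho>" by simp
    show ?case
      using web_diagonal_defect[OF p_def dx[OF t t] dy[OF t t]] elim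
      by (simp add: Q_def P_def u_def)
  qed
  moreover have "(Q \<longlongrightarrow> -4) (at 0)"
  proof -
    have "(u \<longlongrightarrow> 1) (at 0)"
      using analytic_germ2_diagonal_limits(1)[OF h_an] \<open>h 0 0 = 0\<close>
      unfolding u_def by (auto intro!: tendsto_eq_intros)
    then have "(P \<longlongrightarrow> 1) (at 0)"
      unfolding P_def by (auto intro!: tendsto_eq_intros)
    with \<open>(u \<longlongrightarrow> 1) (at 0)\<close>
    have "(Q \<longlongrightarrow> - 1 * (1 * (2 + 0 ^ 2 * 1) + 1 + 1 ^ 2) - 0 - 1 ^ 2 * 0) (at 0)"
      unfolding Q_def using analytic_germ2_diagonal_limits(2,3)[OF h_an]
      by (intro tendsto_intros) auto
    then show ?thesis by simp
  qed
  ultimately show ?thesis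
    by (rule Lim_transform_eventually[rotated])
qed

lemma web_linear_relation_trivial:
  assumes "analytic_germ2 h" and "h 0 0 = 0"
    and "\<forall>x y. p x y = 1 + x * y * (1 + h x y)"
    and "0 < d" and "\<And>t. norm t < d \<Longrightarrow> a * abelian_defect p (\<lambda>z. z) (\<lambda>z. z) t t = 0"
  shows "a = 0"
proof (rule ccontr)
  assume "a \<noteq> 0"
  have "\<forall>\<^sub>F t in at 0. abelian_defect p (\<lambda>z. z) (\<lambda>z. z) t t / t ^ 2 = 0"
    using eventually_at_ball[OF \<open>0 < d\<close>, of 0 UNIV]
    by eventually_elim (use assms(5) \<open>a \<noteq> 0\<close> in simp)
  then show False
    using tendsto_unique[OF _ tendsto_eventually web_diagonal_defect_tendsto[OF assms(1-3)]]
    by fastforce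
qed

lemma abelian_relation_linear:
  assumes p_def: "\<forall>x y. p x y = 1 + x * y * (1 + h x y)"
    and "r analytic_on {0}" "s analytic_on {0}" "r 0 = 0" "s 0 = 0"
    and "0 < e" and defect: "\<And>x y. norm x < e \<Longrightarrow> norm y < e \<Longrightarrow> abelian_defect p r s x y = 0"
  obtains d where "0 < d" and "d \<le> e"
    and "\<And>z. norm z < d \<Longrightarrow> r z = deriv r 0 * z \<and> s z = deriv r 0 * z"
    and "\<And>z. norm z < d \<Longrightarrow> deriv r z = deriv r 0 \<and> deriv s z = deriv r 0"
proof -
  have deriv_r: "deriv r x = deriv s 0" if "norm x < e" for x
    using defect[OF that, of 0] \<open>0 < e\<close> \<open>s 0 = 0\<close>
    by (simp add: abelian_defect_def web_p_on_axes[OF p_def])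
  have deriv_s: "deriv s y = deriv r 0" if "norm y < e" for y
    using defect[OF _ that, of 0] \<open>0 < e\<close> \<open>r 0 = 0\<close>
    by (simp add: abelian_defect_def web_p_on_axes[OF p_def])
  obtain dr ds where "0 < dr" "r holomorphic_on ball 0 dr" "0 < ds" "s holomorphic_on ball 0 ds"
    using \<open>r analytic_on {0}\<close> \<open>s analytic_on {0}\<close> unfolding analytic_on_def by blast
  define d where "d = min e (min dr ds)"
  have "0 < d" using \<open>0 < e\<close> \<open>0 < dr\<close> \<open>0 < ds\<close> by (simp add: d_def)
  have hol: "r holomorphic_on ball 0 d" "s holomorphic_on ball 0 d"
    using \<open>r holomorphic_on ball 0 dr\<close> \<open>s holomorphic_on ball 0 ds\<close>
    by (auto elim!: holomorphic_on_subset simp: d_def)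
  have deriv_const: "deriv r z = deriv r 0" "deriv s z = deriv r 0" if "z \<in> ball 0 d" for z
    using that deriv_r[of z] deriv_r[of 0] deriv_s[of z] \<open>0 < e\<close> by (auto simp: d_def)
  have "r z = deriv r 0 * z" "s z = deriv r 0 * z" if "z \<in> ball 0 d" for z
    using holomorphic_on_ball_deriv_const[OF hol(1) deriv_const(1) that]
      holomorphic_on_ball_deriv_const[OF hol(2) deriv_const(2) that] \<open>r 0 = 0\<close> \<open>s 0 = 0\<close>
    by simp_all
  then show ?thesis
    using deriv_const by (intro that[OF \<open>0 < d\<close>]) (auto simp: d_def)
qed

theorem mainTheorem4:
  fixes p h :: "complex \<Rightarrow> complex \<Rightarrow> complex"
  fixes r s :: "complex \<Rightarrow> complex"
  assumes h_an: "analytic_germ2 h"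
      and h0: "h 0 0 = 0"
      and p_def: "\<forall>x y. p x y = 1 + x * y * (1 + h x y)"
      and curv: "blaschke_curvature_web3 p 0 0 \<noteq> 0"
      and r_an: "r analytic_on {0}"
      and s_an: "s analytic_on {0}"
      and eqn: "\<forall>\<^sub>F z in nhds (0::complex, 0::complex).
                  deriv r (fst z) * p (fst z) (snd z) - r (fst z) * partial_x p (fst z) (snd z)
                  - (deriv s (snd z) * (p (fst z) (snd z)) ^ 3
                     + s (snd z) * (p (fst z) (snd z)) ^ 2 * partial_y p (fst z) (snd z)) = 0"
      and r0: "r 0 = 0"
      and s0: "s 0 = 0"
  shows "(\<forall>\<^sub>F x in nhds 0. r x = 0) \<and> (\<forall>\<^sub>F y in nhds 0. s y = 0)"
proof -
  have "\<forall>\<^sub>F z in nhds (0, 0). abelian_defect p r s (fst z) (snd z) = 0"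
    using eqn by (simp add: abelian_defect_def)
  then obtain e where "0 < e"
    and defect: "\<And>x y. norm x < e \<Longrightarrow> norm y < e \<Longrightarrow> abelian_defect p r s x y = 0"
    by (rule eventually_nhds_Pair_metric) (use that in simp)
  obtain d where "0 < d" "d \<le> e"
    and linear: "\<And>z. norm z < d \<Longrightarrow> r z = deriv r 0 * z \<and> s z = deriv r 0 * z"
    and deriv_linear: "\<And>z. norm z < d \<Longrightarrow> deriv r z = deriv r 0 \<and> deriv s z = deriv r 0"
    using abelian_relation_linear[OF p_def r_an s_an r0 s0 \<open>0 < e\<close> defect] by blast
  have "deriv r 0 * abelian_defect p (\<lambda>z. z) (\<lambda>z. z) t t = 0" if "norm t < d" for t
  proof -
    have "deriv r 0 * abelian_defect p (\<lambda>z. z) (\<lambda>z. z) t t = abelian_defect p r s t t"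
      using linear[OF that] deriv_linear[OF that] by (simp add: abelian_defect_def algebra_simps)
    then show ?thesis
      using defect that \<open>d \<le> e\<close> by simp
  qed
  then have "deriv r 0 = 0"
    by (rule web_linear_relation_trivial[OF h_an h0 p_def \<open>0 < d\<close>])
  then show ?thesis
    using linear \<open>0 < d\<close> unfolding eventually_nhds_metric by (auto simp: dist_norm)
qed

end
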